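(* Let $I\subset\mathbb{R}$ be an open interval, $W\subset I$ countable, and $\hat I$ the divided interval of $I$ at $W$. If $\mathcal{F}$ is a $G$ local system on $\hat I$ (for any $k$-linear group $G$), then for every basis interval $H\subset\hat I$ the restriction map $\mathcal{F}(H)\to\mathcal{F}(\operatorname{trim} H)$ is an isomorphism.
   Context: The divided interval of $I$ at $W$ is the set $\hat I = \{w^{L}, \hat w, w^{R} : w\in W\}\sqcup (I\smallsetminus W)$, with $\pi\colon\hat I\to I$ sending $w^L,\hat w,w^R$ to $w$ and fixing $I\smallsetminus W$; it is totally ordered so that $\pi$ is order preserving and $w^L<\hat w<w^R$. For $a,b\in\hat I\cup\{\pm\infty\}$, $(a,b)=\{s: a<s<b\}$; basis intervals are the nonempty $(a,b)$ other than those with $a=w^L$ or $b=w^R$, and they generate the topology of $\hat I$. For a basis interval $H$, $\operatorname{trim}H$ is $H$ with its least element and its greatest element removed (if they exist); it is again a basis interval. A $k$-linear group $G$ is a subgroup of $\mathrm{GL}(R_G)$ for a finite-dimensional $k$-vector space $R_G$; $\mathcal{C}_G$ is the smallest subcategory of $k$-vector spaces containing $R_G$ and the morphisms $G$ and having all limits and filtered colimits; a $G$ local system is a locally constant sheaf with values in $\mathcal{C}_G$ all of whose stalks are isomorphic to $R_G$. *)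

theory Defs
  imports "HOL-Analysis.Analysis"
begin

text \<open>Points of the divided interval are encoded as pairs (x, t) of a real and an integer tag:
  a point x of I outside W is (x, 0); a point w of W is divided into
  w^L = (w, -1), hat w = (w, 0), w^R = (w, 1).  The projection pi is fst.\<close>

definition divided_interval :: "real set \<Rightarrow> real set \<Rightarrow> (real \<times> int) set" where
  "divided_interval I W =
     {(x, t). x \<in> I \<and> (if x \<in> W then t \<in> {-1, 0, 1} else t = 0)}"

definition dless :: "real \<times> int \<Rightarrow> real \<times> int \<Rightarrow> bool" where
  "dless p q \<longleftrightarrow> fst p < fst q \<or> (fst p = fst q \<and> snd p < snd q)"

text \<open>Open interval (a,b) in the divided interval; endpoints are elements of the divided
  interval or infinite: lower endpoint None means -infinity, upper endpoint None means
  +infinity.\<close>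

definition dinterval ::
  "(real \<times> int) set \<Rightarrow> (real \<times> int) option \<Rightarrow> (real \<times> int) option \<Rightarrow> (real \<times> int) set" where
  "dinterval X lo hi =
     {s \<in> X. (\<forall>a. lo = Some a \<longrightarrow> dless a s) \<and> (\<forall>b. hi = Some b \<longrightarrow> dless s b)}"

definition basis_intervals :: "real set \<Rightarrow> real set \<Rightarrow> (real \<times> int) set set" where
  "basis_intervals I W =
     {H. \<exists>lo hi.
          (\<forall>a. lo = Some a \<longrightarrow> a \<in> divided_interval I W \<and> \<not> (fst a \<in> W \<and> snd a = -1)) \<and>
          (\<forall>b. hi = Some b \<longrightarrow> b \<in> divided_interval I W \<and> \<not> (fst b \<in> W \<and> snd b = 1)) \<and>
          H = dinterval (divided_interval I W) lo hi \<and> H \<noteq> {}}"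

definition divided_topology :: "real set \<Rightarrow> real set \<Rightarrow> (real \<times> int) topology" where
  "divided_topology I W = topology_generated_by (basis_intervals I W)"

definition trim :: "(real \<times> int) set \<Rightarrow> (real \<times> int) set" where
  "trim H = H - {s \<in> H. \<forall>t \<in> H. t \<noteq> s \<longrightarrow> dless s t}
              - {s \<in> H. \<forall>t \<in> H. t \<noteq> s \<longrightarrow> dless t s}"

definition linear_on ::
  "('k \<Rightarrow> 'v::ab_group_add \<Rightarrow> 'v) \<Rightarrow> ('k \<Rightarrow> 'u::ab_group_add \<Rightarrow> 'u) \<Rightarrow> 'v set \<Rightarrow> ('v \<Rightarrow> 'u) \<Rightarrow> bool" where
  "linear_on s1 s2 S f \<longleftrightarrow>
     (\<forall>x\<in>S. \<forall>y\<in>S. f (x + y) = f x + f y) \<and> (\<forall>c. \<forall>x\<in>S. f (s1 c x) = s2 c (f x))"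

text \<open>A sheaf of k-vector spaces on a topological space T: the space of sections over an
  open set U is the linear subspace F U of the ambient k-vector space 'v, and
  res U V is the restriction map F U \<rightarrow> F V.\<close>

definition vs_sheaf ::
  "'a topology \<Rightarrow> ('k::field \<Rightarrow> 'v::ab_group_add \<Rightarrow> 'v) \<Rightarrow> ('a set \<Rightarrow> 'v set)
     \<Rightarrow> ('a set \<Rightarrow> 'a set \<Rightarrow> 'v \<Rightarrow> 'v) \<Rightarrow> bool" where
  "vs_sheaf T sc F res \<longleftrightarrow>
     vector_space sc \<and>
     (\<forall>U. openin T U \<longrightarrow> module.subspace sc (F U)) \<and>
     (\<forall>U V. openin T U \<and> openin T V \<and> V \<subseteq> U \<longrightarrow>
        linear_on sc sc (F U) (res U V) \<and> res U V ` F U \<subseteq> F V) \<and>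
     (\<forall>U. openin T U \<longrightarrow> (\<forall>s\<in>F U. res U U s = s)) \<and>
     (\<forall>U V W. openin T U \<and> openin T V \<and> openin T W \<and> W \<subseteq> V \<and> V \<subseteq> U \<longrightarrow>
        (\<forall>s\<in>F U. res V W (res U V s) = res U W s)) \<and>
     \<comment> \<open>locality\<close>
     (\<forall>U \<U>. openin T U \<and> (\<forall>V\<in>\<U>. openin T V) \<and> \<Union>\<U> = U \<longrightarrow>
        (\<forall>s\<in>F U. \<forall>t\<in>F U. (\<forall>V\<in>\<U>. res U V s = res U V t) \<longrightarrow> s = t)) \<and>
     \<comment> \<open>gluing\<close>
     (\<forall>U \<U> g. openin T U \<and> (\<forall>V\<in>\<U>. openin T V) \<and> \<Union>\<U> = U \<and>
        (\<forall>V\<in>\<U>. g V \<in> F V) \<and>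
        (\<forall>V\<in>\<U>. \<forall>V'\<in>\<U>. res V (V \<inter> V') (g V) = res V' (V \<inter> V') (g V')) \<longrightarrow>
        (\<exists>s\<in>F U. \<forall>V\<in>\<U>. res U V s = g V))"

text \<open>Sections of the constant sheaf with value the vector space 'w over an open set Q:
  the locally constant functions Q \<rightarrow> 'w (extended by 0 outside Q).\<close>

definition loc_const_sections :: "'a topology \<Rightarrow> 'a set \<Rightarrow> ('a \<Rightarrow> 'w::zero) set" where
  "loc_const_sections T Q =
     {f. (\<forall>y. y \<notin> Q \<longrightarrow> f y = 0) \<and>
         (\<forall>y\<in>Q. \<exists>N. openin T N \<and> y \<in> N \<and> N \<subseteq> Q \<and> (\<forall>z\<in>N. f z = f y))}"

text \<open>A local system with stalk R (the whole k-vector space 'w): a sheaf of k-vector spaces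
  which is locally isomorphic to the constant sheaf with value R, i.e. every point has an
  open neighbourhood U on which F restricted to U is isomorphic (by linear bijections
  compatible with restriction) to the constant sheaf with value R.\<close>

definition local_system ::
  "'a topology \<Rightarrow> ('k::field \<Rightarrow> 'v::ab_group_add \<Rightarrow> 'v) \<Rightarrow> ('k \<Rightarrow> 'w::ab_group_add \<Rightarrow> 'w)
     \<Rightarrow> ('a set \<Rightarrow> 'v set) \<Rightarrow> ('a set \<Rightarrow> 'a set \<Rightarrow> 'v \<Rightarrow> 'v) \<Rightarrow> bool" where
  "local_system T sc scW F res \<longleftrightarrow>
     vs_sheaf T sc F res \<and>
     (\<forall>x\<in>topspace T. \<exists>U \<phi>. openin T U \<and> x \<in> U \<and>
        (\<forall>Q. openin T Q \<and> Q \<subseteq> U \<longrightarrow>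
           bij_betw (\<phi> Q) (F Q) (loc_const_sections T Q) \<and>
           (\<forall>s\<in>F Q. \<forall>t\<in>F Q. \<forall>y. \<phi> Q (s + t) y = \<phi> Q s y + \<phi> Q t y) \<and>
           (\<forall>c. \<forall>s\<in>F Q. \<forall>y. \<phi> Q (sc c s) y = scW c (\<phi> Q s y)) \<and>
           (\<forall>Q'. openin T Q' \<and> Q' \<subseteq> Q \<longrightarrow>
              (\<forall>s\<in>F Q. \<forall>y\<in>Q'. \<phi> Q' (res Q Q' s) y = \<phi> Q s y))))"

end

theory Submission
  imports Defs
begin

text \<open>A least element of a basis interval H can only be a point w^R, because every other point has
  untagged points of H immediately to its left; dually, a greatest element can only be a point w^L.
  So it suffices to show that removing such a point e from an open set does not change the
  sections of F.  Every neighbourhood of e = w^R contains a basis interval Q = B \<inter> (hat w, +\<infinity>)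
  for which Q - {e} = B \<inter> (w^R, +\<infinity>) is again a basis interval.  Basis intervals are connected,
  since their untagged points form a real interval meeting every nonempty open subset; hence the local
  system is constant on Q, restriction from Q to Q - {e} is bijective, and gluing along the cover
  of H by Q and H - {e} shows the same for H.\<close>

section \<open>Restriction maps of sheaves and local systems\<close>

lemma vs_sheaf_restrict_mem:
  assumes "vs_sheaf T sc F res" "openin T U" "openin T V" "V \<subseteq> U" "s \<in> F U"
  shows "res U V s \<in> F V"
proof -
  have "\<forall>U V. openin T U \<and> openin T V \<and> V \<subseteq> U \<longrightarrow>
        linear_on sc sc (F U) (res U V) \<and> res U V ` F U \<subseteq> F V"
    using assms(1) unfolding vs_sheaf_def by (elim conjE) assumption
  then show ?thesis using assms(2-) by blast
qed

lemma vs_sheaf_restrict_id: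
  assumes "vs_sheaf T sc F res" "openin T U" "s \<in> F U"
  shows "res U U s = s"
proof -
  have "\<forall>U. openin T U \<longrightarrow> (\<forall>s\<in>F U. res U U s = s)"
    using assms(1) unfolding vs_sheaf_def by (elim conjE) assumption
  then show ?thesis using assms(2-) by blast
qed

lemma vs_sheaf_restrict_trans:
  assumes "vs_sheaf T sc F res" "openin T U" "openin T V" "openin T W" "W \<subseteq> V" "V \<subseteq> U"
    "s \<in> F U"
  shows "res V W (res U V s) = res U W s"
proof -
  have "\<forall>U V W. openin T U \<and> openin T V \<and> openin T W \<and> W \<subseteq> V \<and> V \<subseteq> U \<longrightarrow>
        (\<forall>s\<in>F U. res V W (res U V s) = res U W s)"
    using assms(1) unfolding vs_sheaf_def by (elim conjE) assumption
  then show ?thesis using assms(2-) by blast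
qed

lemma vs_sheaf_locality:
  assumes "vs_sheaf T sc F res" "openin T U" "\<And>V. V \<in> \<U> \<Longrightarrow> openin T V" "\<Union>\<U> = U"
    "s \<in> F U" "t \<in> F U" "\<And>V. V \<in> \<U> \<Longrightarrow> res U V s = res U V t"
  shows "s = t"
proof -
  have "\<forall>U \<U>. openin T U \<and> (\<forall>V\<in>\<U>. openin T V) \<and> \<Union>\<U> = U \<longrightarrow>
        (\<forall>s\<in>F U. \<forall>t\<in>F U. (\<forall>V\<in>\<U>. res U V s = res U V t) \<longrightarrow> s = t)"
    using assms(1) unfolding vs_sheaf_def by (elim conjE) assumption
  then show ?thesis
    using assms(2-) by (elim allE[of _ U] allE[of _ \<U>] impE ballE[of _ _ s] ballE[of _ _ t]) auto
qed

lemma vs_sheaf_gluing: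
  assumes "vs_sheaf T sc F res" "openin T U" "\<And>V. V \<in> \<U> \<Longrightarrow> openin T V" "\<Union>\<U> = U"
    "\<And>V. V \<in> \<U> \<Longrightarrow> g V \<in> F V"
    "\<And>V V'. V \<in> \<U> \<Longrightarrow> V' \<in> \<U> \<Longrightarrow> res V (V \<inter> V') (g V) = res V' (V \<inter> V') (g V')"
  shows "\<exists>s\<in>F U. \<forall>V\<in>\<U>. res U V s = g V"
proof -
  have "\<forall>U \<U> g. openin T U \<and> (\<forall>V\<in>\<U>. openin T V) \<and> \<Union>\<U> = U \<and> (\<forall>V\<in>\<U>. g V \<in> F V) \<and>
        (\<forall>V\<in>\<U>. \<forall>V'\<in>\<U>. res V (V \<inter> V') (g V) = res V' (V \<inter> V') (g V')) \<longrightarrow>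
        (\<exists>s\<in>F U. \<forall>V\<in>\<U>. res U V s = g V)"
    using assms(1) unfolding vs_sheaf_def by (elim conjE) assumption
  then show ?thesis
    by (rule allE[of _ U], elim allE[of _ \<U>] allE[of _ g] impE) (use assms(2-) in auto)
qed

lemma vs_sheaf_eq_if_restrict_eq_Un:
  assumes "vs_sheaf T sc F res" "openin T U" "openin T V" "s \<in> F (U \<union> V)" "t \<in> F (U \<union> V)"
    "res (U \<union> V) U s = res (U \<union> V) U t" "res (U \<union> V) V s = res (U \<union> V) V t"
  shows "s = t"
  by (rule vs_sheaf_locality[OF assms(1), where \<U> = "{U, V}"]) (use assms in auto)

lemma vs_sheaf_glue_Un:
  assumes S: "vs_sheaf T sc F res" and "openin T U" "openin T V" "a \<in> F U" "b \<in> F V"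
    and agree: "res U (U \<inter> V) a = res V (U \<inter> V) b"
  obtains s where "s \<in> F (U \<union> V)" "res (U \<union> V) U s = a" "res (U \<union> V) V s = b"
proof -
  define g where "g X = (if X = U then a else b)" for X
  have "a = b" if "U = V"
    using agree vs_sheaf_restrict_id[OF S] assms(2-5) that by simp
  then have "g V = b"
    unfolding g_def by simp
  have "res X (X \<inter> Y) (g X) = res Y (X \<inter> Y) (g Y)" if "X \<in> {U, V}" "Y \<in> {U, V}" for X Y
    using that agree by (auto simp: g_def Int_commute)
  moreover have "openin T X" "g X \<in> F X" if "X \<in> {U, V}" for X
    using that assms(2-5) by (auto simp: g_def)
  ultimately have "\<exists>s\<in>F (U \<union> V). \<forall>X\<in>{U, V}. res (U \<union> V) X s = g X"
    using assms(2,3) by (intro vs_sheaf_gluing[OF S]) auto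
  then show ?thesis
    using that \<open>g V = b\<close> by (auto simp: g_def)
qed

lemma vs_sheaf_restrict_bij_refl:
  assumes "vs_sheaf T sc F res" "openin T U"
  shows "bij_betw (res U U) (F U) (F U)"
  using bij_betw_id vs_sheaf_restrict_id[OF assms]
  by (metis (no_types, lifting) bij_betw_cong id_apply)

lemma vs_sheaf_restrict_bij_trans:
  assumes S: "vs_sheaf T sc F res" and "openin T U" "openin T V" "openin T W" "W \<subseteq> V" "V \<subseteq> U"
    and "bij_betw (res U V) (F U) (F V)" "bij_betw (res V W) (F V) (F W)"
  shows "bij_betw (res U W) (F U) (F W)"
proof -
  have "bij_betw (res V W \<circ> res U V) (F U) (F W)"
    using assms(7,8) by (rule bij_betw_trans)
  moreover have "(res V W \<circ> res U V) s = res U W s" if "s \<in> F U" for s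
    using vs_sheaf_restrict_trans[OF S assms(2-6) that] by simp
  ultimately show ?thesis
    using bij_betw_cong by blast
qed

lemma vs_sheaf_restrict_bij_Un:
  assumes S: "vs_sheaf T sc F res" and U: "openin T U" and V: "openin T V"
    and bij: "bij_betw (res U (U \<inter> V)) (F U) (F (U \<inter> V))"
  shows "bij_betw (res (U \<union> V) V) (F (U \<union> V)) (F V)"
proof -
  have UV: "openin T (U \<union> V)" and UiV: "openin T (U \<inter> V)"
    using U V by auto
  have via_U: "res (U \<union> V) (U \<inter> V) s = res U (U \<inter> V) (res (U \<union> V) U s)"
    if "s \<in> F (U \<union> V)" for s
    using vs_sheaf_restrict_trans[OF S UV U UiV Int_lower1 Un_upper1 that] by simp
  have via_V: "res (U \<union> V) (U \<inter> V) s = res V (U \<inter> V) (res (U \<union> V) V s)"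
    if "s \<in> F (U \<union> V)" for s
    using vs_sheaf_restrict_trans[OF S UV V UiV Int_lower2 Un_upper2 that] by simp
  have "inj_on (res (U \<union> V) V) (F (U \<union> V))"
  proof (rule inj_onI)
    fix s t assume s: "s \<in> F (U \<union> V)" and t: "t \<in> F (U \<union> V)"
      and eq: "res (U \<union> V) V s = res (U \<union> V) V t"
    have "res U (U \<inter> V) (res (U \<union> V) U s) = res U (U \<inter> V) (res (U \<union> V) U t)"
      using via_U[OF s] via_U[OF t] via_V[OF s] via_V[OF t] eq by simp
    then have "res (U \<union> V) U s = res (U \<union> V) U t"
      using inj_onD[OF bij_betw_imp_inj_on[OF bij]]
        vs_sheaf_restrict_mem[OF S UV U Un_upper1 s] vs_sheaf_restrict_mem[OF S UV U Un_upper1 t]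
      by blast
    then show "s = t"
      using vs_sheaf_eq_if_restrict_eq_Un[OF S U V s t] eq by blast
  qed
  moreover have "F V \<subseteq> res (U \<union> V) V ` F (U \<union> V)"
  proof
    fix b assume b: "b \<in> F V"
    then have "res V (U \<inter> V) b \<in> res U (U \<inter> V) ` F U"
      using bij_betw_imp_surj_on[OF bij] vs_sheaf_restrict_mem[OF S V UiV Int_lower2 b] by simp
    then obtain a where a: "a \<in> F U" "res U (U \<inter> V) a = res V (U \<inter> V) b"
      by (metis imageE)
    obtain s where "s \<in> F (U \<union> V)" "res (U \<union> V) V s = b"
      using vs_sheaf_glue_Un[OF S U V a(1) b a(2)] by blast
    then show "b \<in> res (U \<union> V) V ` F (U \<union> V)" by blast
  qed
  moreover have "res (U \<union> V) V ` F (U \<union> V) \<subseteq> F V"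
    using vs_sheaf_restrict_mem[OF S UV V Un_upper2] by blast
  ultimately show ?thesis
    unfolding bij_betw_def by blast
qed

lemma local_system_vs_sheaf: "local_system T sc scW F res \<Longrightarrow> vs_sheaf T sc F res"
  unfolding local_system_def by (rule conjunct1)

lemma local_system_trivialization:
  fixes scW :: "'k::field \<Rightarrow> 'w::ab_group_add \<Rightarrow> 'w"
  assumes "local_system T sc scW F res" "x \<in> topspace T"
  obtains U \<phi> where "openin T U" "x \<in> U"
    "\<And>Q. openin T Q \<Longrightarrow> Q \<subseteq> U \<Longrightarrow>
       bij_betw (\<phi> Q) (F Q) (loc_const_sections T Q :: ('a \<Rightarrow> 'w) set)"
    "\<And>Q Q' s y. openin T Q \<Longrightarrow> Q \<subseteq> U \<Longrightarrow> openin T Q' \<Longrightarrow> Q' \<subseteq> Q \<Longrightarrow> s \<in> F Q \<Longrightarrow> y \<in> Q'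
       \<Longrightarrow> \<phi> Q' (res Q Q' s) y = \<phi> Q s y"
proof -
  have triv: "\<forall>x\<in>topspace T. \<exists>U \<phi>. openin T U \<and> x \<in> U \<and>
        (\<forall>Q. openin T Q \<and> Q \<subseteq> U \<longrightarrow>
           bij_betw (\<phi> Q) (F Q) (loc_const_sections T Q) \<and>
           (\<forall>s\<in>F Q. \<forall>t\<in>F Q. \<forall>y. \<phi> Q (s + t) y = \<phi> Q s y + \<phi> Q t y) \<and>
           (\<forall>c. \<forall>s\<in>F Q. \<forall>y. \<phi> Q (sc c s) y = scW c (\<phi> Q s y)) \<and>
           (\<forall>Q'. openin T Q' \<and> Q' \<subseteq> Q \<longrightarrow>
              (\<forall>s\<in>F Q. \<forall>y\<in>Q'. \<phi> Q' (res Q Q' s) y = \<phi> Q s y)))"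
    using assms(1) unfolding local_system_def by (elim conjE) assumption
  obtain U \<phi> where U: "openin T U" "x \<in> U" and \<phi>: "\<forall>Q. openin T Q \<and> Q \<subseteq> U \<longrightarrow>
      bij_betw (\<phi> Q) (F Q) (loc_const_sections T Q) \<and>
      (\<forall>s\<in>F Q. \<forall>t\<in>F Q. \<forall>y. \<phi> Q (s + t) y = \<phi> Q s y + \<phi> Q t y) \<and>
      (\<forall>c. \<forall>s\<in>F Q. \<forall>y. \<phi> Q (sc c s) y = scW c (\<phi> Q s y)) \<and>
      (\<forall>Q'. openin T Q' \<and> Q' \<subseteq> Q \<longrightarrow> (\<forall>s\<in>F Q. \<forall>y\<in>Q'. \<phi> Q' (res Q Q' s) y = \<phi> Q s y))"
    using bspec[OF triv assms(2)] by (elim exE conjE) (rule that, assumption+)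
  have bij: "bij_betw (\<phi> Q) (F Q) (loc_const_sections T Q)" if "openin T Q" "Q \<subseteq> U" for Q
    using \<phi>[rule_format, OF conjI[OF that]] by (rule conjunct1)
  have compat: "\<phi> Q' (res Q Q' s) y = \<phi> Q s y"
    if "openin T Q" "Q \<subseteq> U" "openin T Q'" "Q' \<subseteq> Q" "s \<in> F Q" "y \<in> Q'" for Q Q' s y
    using \<phi>[rule_format, OF conjI[OF that(1,2)], THEN conjunct2, THEN conjunct2, THEN conjunct2,
        rule_format, OF conjI[OF that(3,4)] that(5,6)] .
  show ?thesis
    by (rule that[of U \<phi>, OF U bij compat])
qed

lemma loc_const_sections_zero:
  assumes "f \<in> loc_const_sections T Q" "y \<notin> Q"
  shows "f y = 0"
proof -
  have "\<forall>y. y \<notin> Q \<longrightarrow> f y = 0"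
    using assms(1) unfolding loc_const_sections_def mem_Collect_eq by (rule conjunct1)
  then show ?thesis using assms(2) by simp
qed

lemma loc_const_sectionsE:
  assumes "f \<in> loc_const_sections T Q" "y \<in> Q"
  obtains N where "openin T N" "y \<in> N" "N \<subseteq> Q" "\<forall>z\<in>N. f z = f y"
proof -
  have "\<forall>y\<in>Q. \<exists>N. openin T N \<and> y \<in> N \<and> N \<subseteq> Q \<and> (\<forall>z\<in>N. f z = f y)"
    using assms(1) unfolding loc_const_sections_def mem_Collect_eq by (rule conjunct2)
  from bspec[OF this assms(2)] show ?thesis
    using that by blast
qed

lemma connectedin_loc_const_eq:
  assumes "connectedin T S" "f \<in> loc_const_sections T S" "y \<in> S" "z \<in> S"
  shows "f y = f z"
proof (rule ccontr)
  assume "f y \<noteq> f z"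
  have "openin T {x \<in> S. P (f x)}" for P
    unfolding openin_subopen[of T "{x \<in> S. P (f x)}"]
  proof
    fix x assume x: "x \<in> {x \<in> S. P (f x)}"
    then have "x \<in> S" by simp
    then obtain N where N: "openin T N" "x \<in> N" "N \<subseteq> S" "\<forall>w\<in>N. f w = f x"
      by (rule loc_const_sectionsE[OF assms(2)])
    have "N \<subseteq> {x \<in> S. P (f x)}"
    proof
      fix w assume "w \<in> N"
      then have "w \<in> S" "f w = f x"
        using N(3,4) by blast+
      then show "w \<in> {x \<in> S. P (f x)}" using x by simp
    qed
    then show "\<exists>N. openin T N \<and> x \<in> N \<and> N \<subseteq> {x \<in> S. P (f x)}"
      using N(1,2) by blast
  qed
  from this[of "\<lambda>v. v = f y"] this[of "\<lambda>v. v \<noteq> f y"]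
  have "openin T {x \<in> S. f x = f y}" "openin T {x \<in> S. f x \<noteq> f y}"
    by simp_all
  moreover have "S \<subseteq> {x \<in> S. f x = f y} \<union> {x \<in> S. f x \<noteq> f y}"
    "{x \<in> S. f x = f y} \<inter> {x \<in> S. f x \<noteq> f y} \<inter> S = {}"
    "{x \<in> S. f x = f y} \<inter> S \<noteq> {}" "{x \<in> S. f x \<noteq> f y} \<inter> S \<noteq> {}"
    using assms(3,4) \<open>f y \<noteq> f z\<close> by auto
  ultimately show False
    using assms(1) unfolding connectedin by blast
qed

lemma loc_const_sections_restrict_bij:
  assumes "openin T Q" "openin T Q'" "Q' \<subseteq> Q" "Q' \<noteq> {}"
    and "connectedin T Q" "connectedin T Q'"
  shows "bij_betw (\<lambda>f y. if y \<in> Q' then f y else 0) (loc_const_sections T Q)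
           (loc_const_sections T Q' :: ('a \<Rightarrow> 'w::zero) set)"
proof -
  obtain z where z: "z \<in> Q'" using assms(4) by blast
  then have zQ: "z \<in> Q" using assms(3) by blast
  define r where "r f y = (if y \<in> Q' then f y else (0 :: 'w))" for f :: "'a \<Rightarrow> 'w" and y
  have "inj_on r (loc_const_sections T Q)"
  proof (rule inj_onI, rule ext)
    fix f g :: "'a \<Rightarrow> 'w" and y
    assume f: "f \<in> loc_const_sections T Q" and g: "g \<in> loc_const_sections T Q" and "r f = r g"
    then have "f z = g z"
      using fun_cong[OF \<open>r f = r g\<close>, of z] z unfolding r_def by simp
    show "f y = g y"
    proof (cases "y \<in> Q")
      case True
      then show ?thesis
        using connectedin_loc_const_eq[OF assms(5) f True zQ]
          connectedin_loc_const_eq[OF assms(5) g True zQ] \<open>f z = g z\<close>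
        by simp
    next
      case False
      then show ?thesis
        using loc_const_sections_zero[OF f False] loc_const_sections_zero[OF g False] by simp
    qed
  qed
  moreover have "r f \<in> loc_const_sections T Q'" if f: "f \<in> loc_const_sections T Q" for f
    unfolding loc_const_sections_def mem_Collect_eq
  proof (intro conjI allI impI ballI)
    show "r f y = 0" if "y \<notin> Q'" for y
      using that unfolding r_def by simp
    fix y assume "y \<in> Q'"
    have "y \<in> Q" using \<open>y \<in> Q'\<close> assms(3) by blast
    then obtain N where N: "openin T N" "y \<in> N" "N \<subseteq> Q" "\<forall>x\<in>N. f x = f y"
      by (rule loc_const_sectionsE[OF f])
    have "\<forall>x\<in>N \<inter> Q'. r f x = r f y"
    proof
      fix x assume "x \<in> N \<inter> Q'"
      moreover have "f x = f y" using N(4) calculation by blast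
      ultimately show "r f x = r f y" using \<open>y \<in> Q'\<close> unfolding r_def by simp
    qed
    moreover have "openin T (N \<inter> Q')" "y \<in> N \<inter> Q'"
      using N(1,2) assms(2) \<open>y \<in> Q'\<close> by auto
    ultimately show "\<exists>N. openin T N \<and> y \<in> N \<and> N \<subseteq> Q' \<and> (\<forall>x\<in>N. r f x = r f y)"
      by blast
  qed
  moreover have "g \<in> r ` loc_const_sections T Q" if g: "g \<in> loc_const_sections T Q'" for g
  proof
    define f where "f y = (if y \<in> Q then g z else 0)" for y
    show "f \<in> loc_const_sections T Q"
      unfolding loc_const_sections_def mem_Collect_eq
    proof (intro conjI allI impI ballI)
      show "f y = 0" if "y \<notin> Q" for y
        using that by (simp add: f_def)
      show "\<exists>N. openin T N \<and> y \<in> N \<and> N \<subseteq> Q \<and> (\<forall>x\<in>N. f x = f y)" if "y \<in> Q" for y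
        using assms(1) that by (intro exI[of _ Q]) (simp add: f_def)
    qed
    show "g = r f"
    proof
      fix y show "g y = r f y"
        using connectedin_loc_const_eq[OF assms(6) g _ z, of y] loc_const_sections_zero[of g T Q' y]
          g z assms(3)
        unfolding r_def f_def by auto
    qed
  qed
  ultimately have "bij_betw r (loc_const_sections T Q) (loc_const_sections T Q')"
    unfolding bij_betw_def by blast
  then show ?thesis
    unfolding r_def[abs_def] .
qed

lemma bij_betw_if_commuting_square:
  assumes "bij_betw f A B" "bij_betw g A' B'" "bij_betw h B B'" "k ` A \<subseteq> A'"
    and "\<And>a. a \<in> A \<Longrightarrow> g (k a) = h (f a)"
  shows "bij_betw k A A'"
proof -
  have "bij_betw (inv_into A' g \<circ> h \<circ> f) A A'"
    using assms(1-3) by (meson bij_betw_inv_into bij_betw_trans)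
  moreover have "(inv_into A' g \<circ> h \<circ> f) a = k a" if "a \<in> A" for a
  proof -
    have "k a \<in> A'" using assms(4) that by blast
    then have "inv_into A' g (g (k a)) = k a"
      using assms(2) bij_betw_inv_into_left by metis
    then show ?thesis using assms(5)[OF that] by simp
  qed
  ultimately show ?thesis
    using bij_betw_cong by blast
qed

lemma local_system_restrict_bij_Diff:
  fixes scW :: "'k::field \<Rightarrow> 'w::ab_group_add \<Rightarrow> 'w"
  assumes LS: "local_system T sc scW F res"
    and H: "openin T H" "openin T (H - {e})" "e \<in> H"
    and small: "\<And>N. openin T N \<Longrightarrow> e \<in> N \<Longrightarrow> \<exists>Q. openin T Q \<and> e \<in> Q \<and> Q \<subseteq> N \<and>
        openin T (Q - {e}) \<and> Q - {e} \<noteq> {} \<and> connectedin T Q \<and> connectedin T (Q - {e})"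
  shows "bij_betw (res H (H - {e})) (F H) (F (H - {e}))"
proof -
  have S: "vs_sheaf T sc F res"
    using LS by (rule local_system_vs_sheaf)
  have "e \<in> topspace T"
    using H(1,3) openin_subset by blast
  then obtain U \<phi> where U: "openin T U" "e \<in> U"
    and \<phi>: "\<And>Q. openin T Q \<Longrightarrow> Q \<subseteq> U \<Longrightarrow>
       bij_betw (\<phi> Q) (F Q) (loc_const_sections T Q :: ('a \<Rightarrow> 'w) set)"
    and compat: "\<And>Q Q' s y. openin T Q \<Longrightarrow> Q \<subseteq> U \<Longrightarrow> openin T Q' \<Longrightarrow> Q' \<subseteq> Q \<Longrightarrow> s \<in> F Q \<Longrightarrow>
       y \<in> Q' \<Longrightarrow> \<phi> Q' (res Q Q' s) y = \<phi> Q s y"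
    by (rule local_system_trivialization[OF LS]) (rule that)
  have "openin T (U \<inter> H)" "e \<in> U \<inter> H"
    using U H by auto
  then obtain Q where Q: "openin T Q" "e \<in> Q" "Q \<subseteq> U \<inter> H" "openin T (Q - {e})" "Q - {e} \<noteq> {}"
    "connectedin T Q" "connectedin T (Q - {e})"
    using small by meson
  have QU: "Q \<subseteq> U" and QeU: "Q - {e} \<subseteq> U"
    using Q(3) by auto
  define r where "r f y = (if y \<in> Q - {e} then f y else (0 :: 'w))" for f :: "'a \<Rightarrow> 'w" and y
  have "bij_betw r (loc_const_sections T Q) (loc_const_sections T (Q - {e}))"
    unfolding r_def[abs_def] using Q by (intro loc_const_sections_restrict_bij) auto
  moreover have "res Q (Q - {e}) ` F Q \<subseteq> F (Q - {e})"
    using vs_sheaf_restrict_mem[OF S Q(1,4) Diff_subset] by blast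
  moreover have "\<phi> (Q - {e}) (res Q (Q - {e}) s) = r (\<phi> Q s)" if "s \<in> F Q" for s
  proof
    fix y
    have "res Q (Q - {e}) s \<in> F (Q - {e})"
      using vs_sheaf_restrict_mem[OF S Q(1,4) Diff_subset that] .
    then have lc: "\<phi> (Q - {e}) (res Q (Q - {e}) s) \<in> loc_const_sections T (Q - {e})"
      by (rule bij_betw_apply[OF \<phi>[OF Q(4) QeU]])
    show "\<phi> (Q - {e}) (res Q (Q - {e}) s) y = r (\<phi> Q s) y"
    proof (cases "y \<in> Q - {e}")
      case True
      then show ?thesis
        using compat[OF Q(1) QU Q(4) Diff_subset that True] unfolding r_def by simp
    next
      case False
      then show ?thesis
        using loc_const_sections_zero[OF lc False] unfolding r_def by auto
    qed
  qed
  ultimately have "bij_betw (res Q (Q - {e})) (F Q) (F (Q - {e}))"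
    by (rule bij_betw_if_commuting_square[OF \<phi>[OF Q(1) QU] \<phi>[OF Q(4) QeU]])
  moreover have "Q \<inter> (H - {e}) = Q - {e}" "Q \<union> (H - {e}) = H"
    using Q(2,3) H(3) by auto
  ultimately show ?thesis
    using vs_sheaf_restrict_bij_Un[OF S Q(1) H(2)] by simp
qed

section \<open>The order and the basis intervals of the divided interval\<close>

lemma dless_trans: "dless a b \<Longrightarrow> dless b c \<Longrightarrow> dless a c"
  unfolding dless_def by auto

lemma dless_irrefl: "\<not> dless a a"
  unfolding dless_def by simp

lemma dless_asym: "dless a b \<Longrightarrow> \<not> dless b a"
  unfolding dless_def by auto

lemma mem_divided_interval:
  "(x, t) \<in> divided_interval I W \<longleftrightarrow> x \<in> I \<and> (if x \<in> W then t \<in> {-1, 0, 1} else t = 0)"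
  unfolding divided_interval_def by simp

lemma dinterval_subset: "dinterval X lo hi \<subseteq> X"
  unfolding dinterval_def by blast

lemma dinterval_order_convex:
  assumes "p \<in> dinterval X lo hi" "q \<in> dinterval X lo hi" "r \<in> X" "dless p r" "dless r q"
  shows "r \<in> dinterval X lo hi"
  using assms unfolding dinterval_def by (blast intro: dless_trans)

definition lower_endpoint :: "real set \<Rightarrow> real set \<Rightarrow> (real \<times> int) option \<Rightarrow> bool" where
  "lower_endpoint I W lo \<longleftrightarrow>
     (\<forall>a. lo = Some a \<longrightarrow> a \<in> divided_interval I W \<and> \<not> (fst a \<in> W \<and> snd a = -1))"

definition upper_endpoint :: "real set \<Rightarrow> real set \<Rightarrow> (real \<times> int) option \<Rightarrow> bool" where
  "upper_endpoint I W hi \<longleftrightarrow>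
     (\<forall>b. hi = Some b \<longrightarrow> b \<in> divided_interval I W \<and> \<not> (fst b \<in> W \<and> snd b = 1))"

lemma lower_endpoint_simps [simp]:
  "lower_endpoint I W None"
  "lower_endpoint I W (Some a) \<longleftrightarrow> a \<in> divided_interval I W \<and> \<not> (fst a \<in> W \<and> snd a = -1)"
  unfolding lower_endpoint_def by simp_all

lemma upper_endpoint_simps [simp]:
  "upper_endpoint I W None"
  "upper_endpoint I W (Some b) \<longleftrightarrow> b \<in> divided_interval I W \<and> \<not> (fst b \<in> W \<and> snd b = 1)"
  unfolding upper_endpoint_def by simp_all

lemma basis_intervals_iff:
  "H \<in> basis_intervals I W \<longleftrightarrow>
     (\<exists>lo hi. lower_endpoint I W lo \<and> upper_endpoint I W hi \<and>
        H = dinterval (divided_interval I W) lo hi \<and> H \<noteq> {})"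
  unfolding basis_intervals_def lower_endpoint_def upper_endpoint_def by blast

lemma basis_intervalsE:
  assumes "H \<in> basis_intervals I W"
  obtains lo hi where "lower_endpoint I W lo" "upper_endpoint I W hi"
    "H = dinterval (divided_interval I W) lo hi"
  using assms unfolding basis_intervals_iff by blast

lemma basis_interval_subset: "H \<in> basis_intervals I W \<Longrightarrow> H \<subseteq> divided_interval I W"
  by (metis basis_intervalsE dinterval_subset)

fun lower_sup :: "(real \<times> int) option \<Rightarrow> (real \<times> int) option \<Rightarrow> (real \<times> int) option" where
  "lower_sup None b = b"
| "lower_sup a None = a"
| "lower_sup (Some a) (Some b) = Some (if dless a b then b else a)"

fun upper_inf :: "(real \<times> int) option \<Rightarrow> (real \<times> int) option \<Rightarrow> (real \<times> int) option" where
  "upper_inf None b = b"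
| "upper_inf a None = a"
| "upper_inf (Some a) (Some b) = Some (if dless a b then a else b)"

lemma dless_lower_sup_iff:
  "(\<forall>a. lower_sup l1 l2 = Some a \<longrightarrow> dless a s) \<longleftrightarrow>
     (\<forall>a. l1 = Some a \<longrightarrow> dless a s) \<and> (\<forall>a. l2 = Some a \<longrightarrow> dless a s)"
  by (cases l1; cases l2) (auto simp: dless_def)

lemma dless_upper_inf_iff:
  "(\<forall>b. upper_inf h1 h2 = Some b \<longrightarrow> dless s b) \<longleftrightarrow>
     (\<forall>b. h1 = Some b \<longrightarrow> dless s b) \<and> (\<forall>b. h2 = Some b \<longrightarrow> dless s b)"
  by (cases h1; cases h2) (auto simp: dless_def)

lemma dinterval_Int:
  "dinterval X l1 h1 \<inter> dinterval X l2 h2 = dinterval X (lower_sup l1 l2) (upper_inf h1 h2)"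
  unfolding dinterval_def dless_lower_sup_iff dless_upper_inf_iff by blast

lemma lower_endpoint_lower_sup:
  "lower_endpoint I W l1 \<Longrightarrow> lower_endpoint I W l2 \<Longrightarrow> lower_endpoint I W (lower_sup l1 l2)"
  by (cases l1; cases l2) auto

lemma upper_endpoint_upper_inf:
  "upper_endpoint I W h1 \<Longrightarrow> upper_endpoint I W h2 \<Longrightarrow> upper_endpoint I W (upper_inf h1 h2)"
  by (cases h1; cases h2) auto

lemma basis_intervals_Int:
  assumes "B1 \<in> basis_intervals I W" "B2 \<in> basis_intervals I W" "B1 \<inter> B2 \<noteq> {}"
  shows "B1 \<inter> B2 \<in> basis_intervals I W"
proof -
  obtain l1 h1 where 1: "lower_endpoint I W l1" "upper_endpoint I W h1"
      "B1 = dinterval (divided_interval I W) l1 h1"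
    using assms(1) by (rule basis_intervalsE)
  obtain l2 h2 where 2: "lower_endpoint I W l2" "upper_endpoint I W h2"
      "B2 = dinterval (divided_interval I W) l2 h2"
    using assms(2) by (rule basis_intervalsE)
  show ?thesis
    unfolding basis_intervals_iff
    using 1 2 assms(3) lower_endpoint_lower_sup upper_endpoint_upper_inf dinterval_Int by metis
qed

lemma openin_basis_interval: "B \<in> basis_intervals I W \<Longrightarrow> openin (divided_topology I W) B"
  unfolding divided_topology_def openin_topology_generated_by_iff
  by (rule generate_topology_on.Basis)

lemma openin_dinterval:
  assumes "lower_endpoint I W lo" "upper_endpoint I W hi"
  shows "openin (divided_topology I W) (dinterval (divided_interval I W) lo hi)"
  using assms openin_basis_interval[of _ I W] unfolding basis_intervals_iff
  by (cases "dinterval (divided_interval I W) lo hi = {}") auto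

lemma basis_intervals_local_base:
  assumes "openin (divided_topology I W) U" "p \<in> U"
  obtains B where "B \<in> basis_intervals I W" "p \<in> B" "B \<subseteq> U"
proof -
  have "generate_topology_on (basis_intervals I W) U"
    using assms(1) unfolding divided_topology_def openin_topology_generated_by_iff .
  then have "\<exists>B\<in>basis_intervals I W. p \<in> B \<and> B \<subseteq> U"
    using assms(2)
  proof (induction arbitrary: p)
    case Empty
    then show ?case by simp
  next
    case (Int U V)
    then obtain B1 B2 where "B1 \<in> basis_intervals I W" "p \<in> B1" "B1 \<subseteq> U"
        "B2 \<in> basis_intervals I W" "p \<in> B2" "B2 \<subseteq> V"
      by (metis IntE)
    then show ?case
      by (intro bexI[of _ "B1 \<inter> B2"] basis_intervals_Int) auto
  next
    case (UN K)
    then show ?case by (meson UnionE order_trans Union_upper)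
  next
    case (Basis B)
    then show ?case by blast
  qed
  then show ?thesis
    using that by blast
qed

section \<open>Connectedness of basis intervals\<close>

lemma basis_interval_left_segment:
  assumes "open I" "B \<in> basis_intervals I W" "(x, t) \<in> B" "t \<le> 0"
  obtains d where "d > 0" "\<And>y. x - d < y \<Longrightarrow> y < x \<Longrightarrow> (y, 0) \<in> B"
proof -
  obtain lo hi where lo: "lower_endpoint I W lo" and B: "B = dinterval (divided_interval I W) lo hi"
    using assms(2) by (rule basis_intervalsE)
  have xX: "(x, t) \<in> divided_interval I W" and above: "\<And>a. lo = Some a \<Longrightarrow> dless a (x, t)"
    and below: "\<And>b. hi = Some b \<Longrightarrow> dless (x, t) b"
    using assms(3) unfolding B dinterval_def by auto
  have "x \<in> I"
    using xX by (simp add: mem_divided_interval)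
  then obtain d0 where "d0 > 0" "ball x d0 \<subseteq> I"
    using assms(1) open_contains_ball by blast
  have lo_less: "fst a < x" if "lo = Some a" for a
    using lo above[OF that] assms(4) that
    by (cases a) (auto simp: dless_def mem_divided_interval split: if_splits)
  obtain d where "d > 0" "d \<le> d0" and d: "\<And>a. lo = Some a \<Longrightarrow> d \<le> x - fst a"
  proof (cases lo)
    case None
    then show ?thesis using that \<open>d0 > 0\<close> by blast
  next
    case (Some a)
    then show ?thesis using that[of "min d0 (x - fst a)"] \<open>d0 > 0\<close> lo_less by auto
  qed
  have "(y, 0) \<in> B" if "x - d < y" "y < x" for y
  proof -
    have "y \<in> I"
      using that \<open>d \<le> d0\<close> \<open>ball x d0 \<subseteq> I\<close> by (auto simp: dist_real_def subset_iff)
    moreover have "dless a (y, 0)" if "lo = Some a" for a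
      using d[OF that] \<open>x - d < y\<close> by (simp add: dless_def)
    moreover have "dless (y, 0) b" if "hi = Some b" for b
      using below[OF that] \<open>y < x\<close> by (auto simp: dless_def)
    ultimately show ?thesis
      unfolding B dinterval_def by (simp add: mem_divided_interval)
  qed
  then show ?thesis using that \<open>d > 0\<close> by blast
qed

lemma basis_interval_right_segment:
  assumes "open I" "B \<in> basis_intervals I W" "(x, t) \<in> B" "t \<ge> 0"
  obtains d where "d > 0" "\<And>y. x < y \<Longrightarrow> y < x + d \<Longrightarrow> (y, 0) \<in> B"
proof -
  obtain lo hi where hi: "upper_endpoint I W hi" and B: "B = dinterval (divided_interval I W) lo hi"
    using assms(2) by (rule basis_intervalsE)
  have xX: "(x, t) \<in> divided_interval I W" and above: "\<And>a. lo = Some a \<Longrightarrow> dless a (x, t)"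
    and below: "\<And>b. hi = Some b \<Longrightarrow> dless (x, t) b"
    using assms(3) unfolding B dinterval_def by auto
  have "x \<in> I"
    using xX by (simp add: mem_divided_interval)
  then obtain d0 where "d0 > 0" "ball x d0 \<subseteq> I"
    using assms(1) open_contains_ball by blast
  have hi_greater: "x < fst b" if "hi = Some b" for b
    using hi below[OF that] assms(4) that
    by (cases b) (auto simp: dless_def mem_divided_interval split: if_splits)
  obtain d where "d > 0" "d \<le> d0" and d: "\<And>b. hi = Some b \<Longrightarrow> d \<le> fst b - x"
  proof (cases hi)
    case None
    then show ?thesis using that \<open>d0 > 0\<close> by blast
  next
    case (Some b)
    then show ?thesis using that[of "min d0 (fst b - x)"] \<open>d0 > 0\<close> hi_greater by auto
  qed
  have "(y, 0) \<in> B" if "x < y" "y < x + d" for y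
  proof -
    have "y \<in> I"
      using that \<open>d \<le> d0\<close> \<open>ball x d0 \<subseteq> I\<close> by (auto simp: dist_real_def subset_iff)
    moreover have "dless (y, 0) b" if "hi = Some b" for b
      using d[OF that] \<open>y < x + d\<close> by (simp add: dless_def)
    moreover have "dless a (y, 0)" if "lo = Some a" for a
      using above[OF that] \<open>x < y\<close> by (auto simp: dless_def)
    ultimately show ?thesis
      unfolding B dinterval_def by (simp add: mem_divided_interval)
  qed
  then show ?thesis using that \<open>d > 0\<close> by blast
qed

lemma basis_interval_real_nbhd:
  assumes "open I" "B \<in> basis_intervals I W" "(x, 0) \<in> B"
  obtains d where "d > 0" "\<And>y. \<bar>y - x\<bar> < d \<Longrightarrow> (y, 0) \<in> B"
proof -
  obtain d1 where "d1 > 0" and left: "\<And>y. x - d1 < y \<Longrightarrow> y < x \<Longrightarrow> (y, 0) \<in> B"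
    using basis_interval_left_segment[OF assms] by auto
  obtain d2 where "d2 > 0" and right: "\<And>y. x < y \<Longrightarrow> y < x + d2 \<Longrightarrow> (y, 0) \<in> B"
    using basis_interval_right_segment[OF assms] by auto
  have "(y, 0) \<in> B" if "\<bar>y - x\<bar> < min d1 d2" for y
  proof (cases y x rule: linorder_cases)
    case less
    moreover have "x - d1 < y" using that by (simp add: abs_less_iff)
    ultimately show ?thesis by (rule left[rotated])
  next
    case equal
    then show ?thesis using assms(3) by simp
  next
    case greater
    moreover have "y < x + d2" using that by (simp add: abs_less_iff)
    ultimately show ?thesis by (rule right)
  qed
  then show ?thesis using that[of "min d1 d2"] \<open>d1 > 0\<close> \<open>d2 > 0\<close> by auto
qed

lemma basis_interval_real_point:
  assumes "open I" "B \<in> basis_intervals I W" "p \<in> B"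
  obtains y where "(y, 0) \<in> B"
proof (cases "snd p \<le> 0")
  case True
  then obtain d where "d > 0" "\<And>y. fst p - d < y \<Longrightarrow> y < fst p \<Longrightarrow> (y, 0) \<in> B"
    using basis_interval_left_segment[OF assms(1,2), of "fst p" "snd p"] assms(3) by auto
  then show ?thesis using that[of "fst p - d / 2"] by simp
next
  case False
  then obtain d where "d > 0" "\<And>y. fst p < y \<Longrightarrow> y < fst p + d \<Longrightarrow> (y, 0) \<in> B"
    using basis_interval_right_segment[OF assms(1,2), of "fst p" "snd p"] assms(3) by auto
  then show ?thesis using that[of "fst p + d / 2"] by simp
qed

lemma is_interval_basis_interval_reals:
  assumes "is_interval I" "B \<in> basis_intervals I W"
  shows "is_interval {x. (x, 0) \<in> B}"
  unfolding is_interval_1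
proof (intro ballI allI impI)
  fix a b x assume "a \<in> {x. (x, 0) \<in> B}" "b \<in> {x. (x, 0) \<in> B}" "a \<le> x \<and> x \<le> b"
  then have a: "(a, 0) \<in> B" and b: "(b, 0) \<in> B" and "a \<le> x" "x \<le> b" by simp_all
  have "(x, 0) \<in> B" if "a < x" "x < b"
  proof -
    obtain lo hi where B: "B = dinterval (divided_interval I W) lo hi"
      using assms(2) by (rule basis_intervalsE)
    have "(a, 0) \<in> divided_interval I W" "(b, 0) \<in> divided_interval I W"
      using a b basis_interval_subset[OF assms(2)] by blast+
    then have "x \<in> I"
      using mem_is_interval_1_I[OF assms(1)] \<open>a \<le> x\<close> \<open>x \<le> b\<close>
      unfolding mem_divided_interval by metis
    then have "(x, 0) \<in> divided_interval I W"
      by (simp add: mem_divided_interval)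
    moreover have "dless (a, 0) (x, 0)" "dless (x, 0) (b, 0)"
      using that by (simp_all add: dless_def)
    ultimately show ?thesis
      using dinterval_order_convex[of "(a, 0)" _ lo hi "(b, 0)" "(x, 0)"] a b unfolding B by blast
  qed
  moreover have "x = a \<or> x = b" if "\<not> (a < x \<and> x < b)"
    using \<open>a \<le> x\<close> \<open>x \<le> b\<close> that by linarith
  ultimately show "x \<in> {x. (x, 0) \<in> B}"
    using a b by auto
qed

lemma loc_const_sections_basis_nbhd:
  assumes "f \<in> loc_const_sections (divided_topology I W) J" "p \<in> J"
  obtains B where "B \<in> basis_intervals I W" "p \<in> B" "B \<subseteq> J" "\<And>q. q \<in> B \<Longrightarrow> f q = f p"
proof -
  obtain N where N: "openin (divided_topology I W) N" "p \<in> N" "N \<subseteq> J" "\<forall>q\<in>N. f q = f p"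
    by (rule loc_const_sectionsE[OF assms])
  obtain B where "B \<in> basis_intervals I W" "p \<in> B" "B \<subseteq> N"
    using N(1,2) by (rule basis_intervals_local_base)
  with N show ?thesis
    using that by blast
qed

lemma basis_interval_loc_const_eq:
  assumes "open I" "is_interval I" "B \<in> basis_intervals I W"
    and f: "f \<in> loc_const_sections (divided_topology I W) B" and "p \<in> B" "q \<in> B"
  shows "f p = f q"
proof -
  define D where "D = {x. (x, 0) \<in> B}"
  have real_value: "\<exists>x\<in>D. f r = f (x, 0)" if r: "r \<in> B" for r
  proof -
    obtain B' where B': "B' \<in> basis_intervals I W" "r \<in> B'" "B' \<subseteq> B" "\<And>q. q \<in> B' \<Longrightarrow> f q = f r"
      using loc_const_sections_basis_nbhd[OF f r] by blast
    obtain y where "(y, 0) \<in> B'"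
      using basis_interval_real_point[OF assms(1) B'(1,2)] by blast
    then have "y \<in> D" "f r = f (y, 0)"
      using B'(3,4) unfolding D_def by auto
    then show ?thesis by blast
  qed
  have "connected D"
    unfolding D_def using is_interval_basis_interval_reals[OF assms(2,3)] is_interval_connected_1 by blast
  moreover have "\<forall>x\<in>D. eventually (\<lambda>y. f (x, 0) = f (y, 0)) (at x within D)"
  proof
    fix x assume "x \<in> D"
    then obtain B' where B': "B' \<in> basis_intervals I W" "(x, 0) \<in> B'" "\<And>q. q \<in> B' \<Longrightarrow> f q = f (x, 0)"
      using loc_const_sections_basis_nbhd[OF f] unfolding D_def by blast
    obtain d where "d > 0" and d: "\<And>y. \<bar>y - x\<bar> < d \<Longrightarrow> (y, 0) \<in> B'"
      using basis_interval_real_nbhd[OF assms(1) B'(1,2)] by blast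
    have "\<forall>y\<in>D. y \<noteq> x \<and> dist y x < d \<longrightarrow> f (x, 0) = f (y, 0)"
      using d B'(3) by (simp add: dist_real_def)
    then show "eventually (\<lambda>y. f (x, 0) = f (y, 0)) (at x within D)"
      unfolding eventually_at using \<open>d > 0\<close> by blast
  qed
  moreover obtain x1 x2 where "x1 \<in> D" "f p = f (x1, 0)" "x2 \<in> D" "f q = f (x2, 0)"
    using real_value[OF \<open>p \<in> B\<close>] real_value[OF \<open>q \<in> B\<close>] by blast
  ultimately show ?thesis
    using connected_local_const[of D x1 x2 "\<lambda>x. f (x, 0)"] by simp
qed

lemma connectedin_basis_interval:
  assumes "open I" "is_interval I" "B \<in> basis_intervals I W"
  shows "connectedin (divided_topology I W) B"
  unfolding connectedin
proof (intro conjI notI)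
  have B: "openin (divided_topology I W) B"
    using assms(3) by (rule openin_basis_interval)
  then show "B \<subseteq> topspace (divided_topology I W)"
    by (rule openin_subset)
  assume "\<exists>E1 E2. openin (divided_topology I W) E1 \<and> openin (divided_topology I W) E2 \<and>
    B \<subseteq> E1 \<union> E2 \<and> E1 \<inter> E2 \<inter> B = {} \<and> E1 \<inter> B \<noteq> {} \<and> E2 \<inter> B \<noteq> {}"
  then obtain E1 E2 where E: "openin (divided_topology I W) E1" "openin (divided_topology I W) E2"
    "B \<subseteq> E1 \<union> E2" "E1 \<inter> E2 \<inter> B = {}" and "E1 \<inter> B \<noteq> {}" "E2 \<inter> B \<noteq> {}"
    by blast
  then obtain y z where yz: "y \<in> E1 \<inter> B" "z \<in> E2 \<inter> B" by blast
  define f :: "real \<times> int \<Rightarrow> real" where "f x = (if x \<in> E1 \<inter> B then 1 else 0)" for x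
  have "f \<in> loc_const_sections (divided_topology I W) B"
    unfolding loc_const_sections_def mem_Collect_eq
  proof (intro conjI allI impI ballI)
    show "f x = 0" if "x \<notin> B" for x
      using that by (simp add: f_def)
    fix x assume "x \<in> B"
    then consider "x \<in> E1" | "x \<in> E2" "x \<notin> E1"
      using E(3) by blast
    then show "\<exists>N. openin (divided_topology I W) N \<and> x \<in> N \<and> N \<subseteq> B \<and> (\<forall>w\<in>N. f w = f x)"
    proof cases
      case 1
      then show ?thesis
        using E(1) B \<open>x \<in> B\<close> by (intro exI[of _ "E1 \<inter> B"]) (auto simp: f_def)
    next
      case 2
      then show ?thesis
        using E(2,4) B \<open>x \<in> B\<close> by (intro exI[of _ "E2 \<inter> B"]) (auto simp: f_def)
    qed
  qed
  then have "f y = f z"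
    using basis_interval_loc_const_eq[OF assms] yz by blast
  then show False
    using yz E(4) unfolding f_def by (auto split: if_splits)
qed

section \<open>Removing a tagged point\<close>

lemma dless_succ_iff:
  "s \<in> divided_interval I W \<Longrightarrow> dless (w, 0) s \<and> s \<noteq> (w, 1) \<longleftrightarrow> dless (w, 1) s"
  by (cases s) (auto simp: divided_interval_def dless_def)

lemma dless_pred_iff:
  "s \<in> divided_interval I W \<Longrightarrow> dless s (w, 0) \<and> s \<noteq> (w, -1) \<longleftrightarrow> dless s (w, -1)"
  by (cases s) (auto simp: divided_interval_def dless_def)

lemma dinterval_in_basis_intervals:
  assumes "lower_endpoint I W lo" "upper_endpoint I W hi" "p \<in> dinterval (divided_interval I W) lo hi"
  shows "dinterval (divided_interval I W) lo hi \<in> basis_intervals I W"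
  unfolding basis_intervals_iff using assms by (intro exI[of _ lo] exI[of _ hi]) auto

lemma punctured_basis_nbhd:
  assumes "open I" "e \<in> divided_interval I W" "snd e \<noteq> 0"
    and "openin (divided_topology I W) N" "e \<in> N"
  obtains Q where "Q \<in> basis_intervals I W" "e \<in> Q" "Q \<subseteq> N" "Q - {e} \<in> basis_intervals I W"
proof -
  define X where "X = divided_interval I W"
  obtain B where B: "B \<in> basis_intervals I W" "e \<in> B" "B \<subseteq> N"
    using assms(4,5) by (rule basis_intervals_local_base)
  obtain w t where e: "e = (w, t)" by force
  have "w \<in> I" "w \<in> W" "t = 1 \<or> t = -1"
    using assms(2,3) unfolding e mem_divided_interval by (auto split: if_splits)
  then have hat: "(w, 0) \<in> X"
    unfolding X_def mem_divided_interval by simp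
  obtain lo hi lo' hi' where ends: "lower_endpoint I W lo" "upper_endpoint I W hi"
      "lower_endpoint I W lo'" "upper_endpoint I W hi'"
    and "e \<in> dinterval X lo hi" "dinterval X lo hi - {e} = dinterval X lo' hi'"
    and "B \<inter> dinterval X lo' hi' \<noteq> {}"
  proof (cases "t = 1")
    case True
    obtain d where "d > 0" and right: "\<And>y. w < y \<Longrightarrow> y < w + d \<Longrightarrow> (y, 0) \<in> B"
      using basis_interval_right_segment[OF assms(1) B(1), of w 1] B(2) True e by auto
    have "(w + d / 2, 0) \<in> B \<inter> dinterval X (Some (w, 1)) None"
      using right[of "w + d / 2"] \<open>d > 0\<close> basis_interval_subset[OF B(1)]
      by (auto simp: dinterval_def dless_def X_def)
    moreover have "dinterval X (Some (w, 0)) None - {e} = dinterval X (Some (w, 1)) None"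
      unfolding dinterval_def X_def e True using dless_succ_iff by blast
    moreover have "e \<in> dinterval X (Some (w, 0)) None"
      using assms(2) unfolding e True X_def dinterval_def dless_def by simp
    ultimately show ?thesis
      using that[of "Some (w, 0)" None "Some (w, 1)" None] assms(2) hat \<open>w \<in> W\<close>
      unfolding e True X_def by auto
  next
    case False
    then have "t = -1" using \<open>t = 1 \<or> t = -1\<close> by simp
    obtain d where "d > 0" and left: "\<And>y. w - d < y \<Longrightarrow> y < w \<Longrightarrow> (y, 0) \<in> B"
      using basis_interval_left_segment[OF assms(1) B(1), of w "-1"] B(2) \<open>t = -1\<close> e by auto
    have "(w - d / 2, 0) \<in> B \<inter> dinterval X None (Some (w, -1))"
      using left[of "w - d / 2"] \<open>d > 0\<close> basis_interval_subset[OF B(1)]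
      by (auto simp: dinterval_def dless_def X_def)
    moreover have "dinterval X None (Some (w, 0)) - {e} = dinterval X None (Some (w, -1))"
      unfolding dinterval_def X_def e \<open>t = -1\<close> using dless_pred_iff by blast
    moreover have "e \<in> dinterval X None (Some (w, 0))"
      using assms(2) unfolding e \<open>t = -1\<close> X_def dinterval_def dless_def by simp
    ultimately show ?thesis
      using that[of None "Some (w, 0)" None "Some (w, -1)"] assms(2) hat \<open>w \<in> W\<close>
      unfolding e \<open>t = -1\<close> X_def by auto
  qed
  show ?thesis
  proof (rule that)
    show "B \<inter> dinterval X lo hi \<in> basis_intervals I W"
      using B(1,2) dinterval_in_basis_intervals[OF ends(1,2)] \<open>e \<in> dinterval X lo hi\<close>
      by (intro basis_intervals_Int) (auto simp: X_def)
    have "B \<inter> dinterval X lo hi - {e} = B \<inter> dinterval X lo' hi'"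
      using \<open>dinterval X lo hi - {e} = dinterval X lo' hi'\<close> by blast
    then show "B \<inter> dinterval X lo hi - {e} \<in> basis_intervals I W"
      using B(1) dinterval_in_basis_intervals[OF ends(3,4)] \<open>B \<inter> dinterval X lo' hi' \<noteq> {}\<close>
      by (auto simp: X_def intro!: basis_intervals_Int)
  qed (use B \<open>e \<in> dinterval X lo hi\<close> in auto)
qed

lemma divided_local_system_restrict_bij_Diff:
  assumes "open I" "is_interval I" "local_system (divided_topology I W) sc scW F res"
    and "e \<in> divided_interval I W" "snd e \<noteq> 0"
    and "openin (divided_topology I W) H" "openin (divided_topology I W) (H - {e})" "e \<in> H"
  shows "bij_betw (res H (H - {e})) (F H) (F (H - {e}))"
proof (rule local_system_restrict_bij_Diff[OF assms(3,6-8)])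
  fix N assume "openin (divided_topology I W) N" "e \<in> N"
  then obtain Q where Q: "Q \<in> basis_intervals I W" "e \<in> Q" "Q \<subseteq> N" "Q - {e} \<in> basis_intervals I W"
    using punctured_basis_nbhd[OF assms(1,4,5)] by blast
  have "Q - {e} \<noteq> {}"
    using Q(4) unfolding basis_intervals_iff by blast
  then show "\<exists>Q. openin (divided_topology I W) Q \<and> e \<in> Q \<and> Q \<subseteq> N \<and>
      openin (divided_topology I W) (Q - {e}) \<and> Q - {e} \<noteq> {} \<and>
      connectedin (divided_topology I W) Q \<and> connectedin (divided_topology I W) (Q - {e})"
    using Q openin_basis_interval[OF Q(1)] openin_basis_interval[OF Q(4)]
      connectedin_basis_interval[OF assms(1,2) Q(1)] connectedin_basis_interval[OF assms(1,2) Q(4)]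
    by (intro exI[of _ Q]) simp
qed

section \<open>Trimming a basis interval\<close>

definition dleast :: "(real \<times> int) set \<Rightarrow> (real \<times> int) set" where
  "dleast H = {s \<in> H. \<forall>t \<in> H. t \<noteq> s \<longrightarrow> dless s t}"

definition dgreatest :: "(real \<times> int) set \<Rightarrow> (real \<times> int) set" where
  "dgreatest H = {s \<in> H. \<forall>t \<in> H. t \<noteq> s \<longrightarrow> dless t s}"

lemma trim_eq: "trim H = H - dleast H - dgreatest H"
  by (simp only: trim_def dleast_def dgreatest_def)

lemma dleast_eq_singleton:
  assumes "e \<in> dleast H"
  shows "dleast H = {e}"
proof
  show "dleast H \<subseteq> {e}"
  proof
    fix s assume "s \<in> dleast H"
    then have "s = e \<or> (dless e s \<and> dless s e)"
      using assms unfolding dleast_def by auto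
    then show "s \<in> {e}"
      using dless_asym by blast
  qed
qed (use assms in simp)

lemma dgreatest_eq_singleton:
  assumes "e \<in> dgreatest H"
  shows "dgreatest H = {e}"
proof
  show "dgreatest H \<subseteq> {e}"
  proof
    fix s assume "s \<in> dgreatest H"
    then have "s = e \<or> (dless e s \<and> dless s e)"
      using assms unfolding dgreatest_def by auto
    then show "s \<in> {e}"
      using dless_asym by blast
  qed
qed (use assms in simp)

lemma snd_dleast_basis_interval:
  assumes "open I" "H \<in> basis_intervals I W" "e \<in> dleast H"
  shows "snd e = 1"
proof -
  obtain x t where e: "e = (x, t)" by force
  have eH: "(x, t) \<in> H" and least: "\<And>s. s \<in> H \<Longrightarrow> s \<noteq> (x, t) \<Longrightarrow> dless (x, t) s"
    using assms(3) unfolding e dleast_def by auto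
  have "\<not> t \<le> 0"
  proof
    assume "t \<le> 0"
    then obtain d where "d > 0" "\<And>y. x - d < y \<Longrightarrow> y < x \<Longrightarrow> (y, 0) \<in> H"
      using basis_interval_left_segment[OF assms(1,2) eH] by blast
    then have "dless (x, t) (x - d / 2, 0)"
      using least[of "(x - d / 2, 0)"] by simp
    then show False
      using \<open>d > 0\<close> by (simp add: dless_def)
  qed
  then show ?thesis
    using basis_interval_subset[OF assms(2)] eH unfolding e
    by (auto simp: mem_divided_interval split: if_splits)
qed

lemma snd_dgreatest_basis_interval:
  assumes "open I" "H \<in> basis_intervals I W" "e \<in> dgreatest H"
  shows "snd e = -1"
proof -
  obtain x t where e: "e = (x, t)" by force
  have eH: "(x, t) \<in> H" and greatest: "\<And>s. s \<in> H \<Longrightarrow> s \<noteq> (x, t) \<Longrightarrow> dless s (x, t)"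
    using assms(3) unfolding e dgreatest_def by auto
  have "\<not> t \<ge> 0"
  proof
    assume "t \<ge> 0"
    then obtain d where "d > 0" "\<And>y. x < y \<Longrightarrow> y < x + d \<Longrightarrow> (y, 0) \<in> H"
      using basis_interval_right_segment[OF assms(1,2) eH] by blast
    then have "dless (x + d / 2, 0) (x, t)"
      using greatest[of "(x + d / 2, 0)"] by simp
    then show False
      using \<open>d > 0\<close> by (simp add: dless_def)
  qed
  then show ?thesis
    using basis_interval_subset[OF assms(2)] eH unfolding e
    by (auto simp: mem_divided_interval split: if_splits)
qed

lemma openin_Diff_least:
  assumes "openin (divided_topology I W) H" "H \<subseteq> divided_interval I W"
    and "e \<in> divided_interval I W" "snd e = 1" "\<And>s. s \<in> H \<Longrightarrow> s \<noteq> e \<Longrightarrow> dless e s"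
  shows "openin (divided_topology I W) (H - {e})"
proof -
  have "H - {e} = H \<inter> dinterval (divided_interval I W) (Some e) None"
    using assms(2,5) dless_irrefl[of e] unfolding dinterval_def by auto
  moreover have "openin (divided_topology I W) (dinterval (divided_interval I W) (Some e) None)"
    using assms(3,4) by (intro openin_dinterval) auto
  ultimately show ?thesis
    using assms(1) by auto
qed

lemma openin_Diff_greatest:
  assumes "openin (divided_topology I W) H" "H \<subseteq> divided_interval I W"
    and "e \<in> divided_interval I W" "snd e = -1" "\<And>s. s \<in> H \<Longrightarrow> s \<noteq> e \<Longrightarrow> dless s e"
  shows "openin (divided_topology I W) (H - {e})"
proof -
  have "H - {e} = H \<inter> dinterval (divided_interval I W) None (Some e)"
    using assms(2,5) dless_irrefl[of e] unfolding dinterval_def by auto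
  moreover have "openin (divided_topology I W) (dinterval (divided_interval I W) None (Some e))"
    using assms(3,4) by (intro openin_dinterval) auto
  ultimately show ?thesis
    using assms(1) by auto
qed

lemma divided_local_system_restrict_bij_Diff_dleast:
  assumes "open I" "is_interval I" "local_system (divided_topology I W) sc scW F res"
    and H: "H \<in> basis_intervals I W"
  shows "openin (divided_topology I W) (H - dleast H) \<and>
    bij_betw (res H (H - dleast H)) (F H) (F (H - dleast H))"
proof (cases "dleast H = {}")
  case True
  have "vs_sheaf (divided_topology I W) sc F res"
    using assms(3) by (rule local_system_vs_sheaf)
  then show ?thesis
    using True openin_basis_interval[OF H] vs_sheaf_restrict_bij_refl by simp
next
  case False
  then obtain e where e: "e \<in> dleast H" by blast
  then have "e \<in> H" "snd e = 1" "\<And>s. s \<in> H \<Longrightarrow> s \<noteq> e \<Longrightarrow> dless e s"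
    using snd_dleast_basis_interval[OF assms(1) H] unfolding dleast_def by auto
  moreover have "H \<subseteq> divided_interval I W"
    using H by (rule basis_interval_subset)
  ultimately have "openin (divided_topology I W) (H - {e})"
    using openin_Diff_least openin_basis_interval[OF H] by blast
  moreover have "bij_betw (res H (H - {e})) (F H) (F (H - {e}))"
    using \<open>e \<in> H\<close> \<open>snd e = 1\<close> \<open>H \<subseteq> divided_interval I W\<close> openin_basis_interval[OF H] calculation
    by (intro divided_local_system_restrict_bij_Diff[OF assms(1-3)]) auto
  ultimately show ?thesis
    unfolding dleast_eq_singleton[OF e] by blast
qed

lemma divided_local_system_restrict_bij_Diff_dgreatest:
  assumes "open I" "is_interval I" "local_system (divided_topology I W) sc scW F res"
    and H: "H \<in> basis_intervals I W" and H': "openin (divided_topology I W) H'" "H' \<subseteq> H"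
    and "dgreatest H \<subseteq> H'"
  shows "openin (divided_topology I W) (H' - dgreatest H) \<and>
    bij_betw (res H' (H' - dgreatest H)) (F H') (F (H' - dgreatest H))"
proof (cases "dgreatest H = {}")
  case True
  have "vs_sheaf (divided_topology I W) sc F res"
    using assms(3) by (rule local_system_vs_sheaf)
  then show ?thesis
    using True H'(1) vs_sheaf_restrict_bij_refl by simp
next
  case False
  then obtain e where e: "e \<in> dgreatest H" by blast
  then have "e \<in> H'" "snd e = -1" "\<And>s. s \<in> H' \<Longrightarrow> s \<noteq> e \<Longrightarrow> dless s e"
    using snd_dgreatest_basis_interval[OF assms(1) H] H'(2) assms(7) unfolding dgreatest_def by auto
  moreover have "H' \<subseteq> divided_interval I W"
    using H'(2) basis_interval_subset[OF H] by blast
  ultimately have "openin (divided_topology I W) (H' - {e})"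
    using openin_Diff_greatest H'(1) by blast
  moreover have "bij_betw (res H' (H' - {e})) (F H') (F (H' - {e}))"
    using \<open>e \<in> H'\<close> \<open>snd e = -1\<close> \<open>H' \<subseteq> divided_interval I W\<close> H'(1) calculation
    by (intro divided_local_system_restrict_bij_Diff[OF assms(1-3)]) auto
  ultimately show ?thesis
    unfolding dgreatest_eq_singleton[OF e] by blast
qed

theorem lemma3p4:
  fixes I W :: "real set"
    and sc :: "'k::field \<Rightarrow> 'v::ab_group_add \<Rightarrow> 'v"
    and scW :: "'k \<Rightarrow> 'w::ab_group_add \<Rightarrow> 'w"
    and F :: "(real \<times> int) set \<Rightarrow> 'v set"
    and res :: "(real \<times> int) set \<Rightarrow> (real \<times> int) set \<Rightarrow> 'v \<Rightarrow> 'v"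
    and H :: "(real \<times> int) set"
  assumes "open I" and "is_interval I"
    and "W \<subseteq> I" and "countable W"
    and "\<exists>B. finite_dimensional_vector_space scW B"
    and "local_system (divided_topology I W) sc scW F res"
    and "H \<in> basis_intervals I W"
  shows "bij_betw (res H (trim H)) (F H) (F (trim H))"
proof -
  have S: "vs_sheaf (divided_topology I W) sc F res"
    using assms(6) by (rule local_system_vs_sheaf)
  obtain least: "openin (divided_topology I W) (H - dleast H)"
      "bij_betw (res H (H - dleast H)) (F H) (F (H - dleast H))"
    using divided_local_system_restrict_bij_Diff_dleast[OF assms(1,2,6,7)] by blast
  have "g \<notin> dleast H" if "g \<in> dgreatest H" for g
    using snd_dleast_basis_interval[OF assms(1,7), of g] snd_dgreatest_basis_interval[OF assms(1,7) that]
    by auto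
  then have "dgreatest H \<subseteq> H - dleast H"
    unfolding dgreatest_def by blast
  then obtain greatest: "openin (divided_topology I W) (trim H)"
      "bij_betw (res (H - dleast H) (trim H)) (F (H - dleast H)) (F (trim H))"
    using divided_local_system_restrict_bij_Diff_dgreatest[OF assms(1,2,6,7) least(1)]
    unfolding trim_eq by blast
  have "trim H \<subseteq> H - dleast H"
    unfolding trim_eq by blast
  then show ?thesis
    using vs_sheaf_restrict_bij_trans[OF S openin_basis_interval[OF assms(7)] least(1) greatest(1)]
      least(2) greatest(2) by blast
qed

end
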